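(* Let $x$ be a real number with $x>1$ or $x<0$, and let $$F(s)=\frac{20x^2-56x+35}{(4s^2+x(x-1))^2}-\frac{4(x-1)(2x-3)(2x-1)^2}{(4s^2+x(x-1))^3}.$$ Then $$8x^2(1-x)\int_0^{1/4}\frac{sF(s)}{\sqrt{1-4s}}\,ds=3(x-1)R(x)+5x-6.$$
   Context: For real $x$ with $x>1$ or $x<0$, $R(x)=\sqrt x\,\operatorname{arctanh}\frac1{\sqrt x}$, i.e. $R(x)=\frac{\sqrt x}2\log\frac{\sqrt x+1}{\sqrt x-1}$ if $x>1$ and $R(x)=\sqrt{|x|}\arctan\frac1{\sqrt{|x|}}$ if $x<0$; equivalently, for $|x|>1$, $R(x)=\sum_{k\ge0}\frac{x^{-k}}{2k+1}$. *)

theory Defs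
  imports "HOL-Analysis.Analysis"
begin

text \<open>R(x) = sqrt x * artanh (1/sqrt x) for x > 1, and sqrt |x| * arctan (1/sqrt |x|) for x < 0.
  Outside these ranges R is not used (value 0 by convention).\<close>
definition R :: "real \<Rightarrow> real" where
  "R x = (if x > 1 then sqrt x / 2 * ln ((sqrt x + 1) / (sqrt x - 1))
          else if x < 0 then sqrt \<bar>x\<bar> * arctan (1 / sqrt \<bar>x\<bar>)
          else 0)"

definition F :: "real \<Rightarrow> real \<Rightarrow> real" where
  "F x s = (20 * x^2 - 56 * x + 35) / (4 * s^2 + x * (x - 1))^2
           - 4 * (x - 1) * (2 * x - 3) * (2 * x - 1)^2 / (4 * s^2 + x * (x - 1))^3"

end

theory Submission
  imports Defs
begin

text \<open>The integral is evaluated by an explicit antiderivative. With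
  \<open>Q(s) = 4 s\<^sup>2 + x (x - 1)\<close>, the integrand is the derivative of
  \<open>sqrt (1 - 4 s) P(s) / Q(s)\<^sup>2\<close> for a suitable cubic \<open>P\<close>, plus the remainder
  \<open>3 (1 - x - 2 s) / (4 x sqrt (1 - 4 s) Q(s))\<close>. The substitution
  \<open>v = x sqrt (1 - 4 s) / (x - 2 s)\<close> turns the remainder into \<open>3 / (8 x) dv / (x - v\<^sup>2)\<close>,
  which integrates to an \<open>artanh\<close> for \<open>x > 1\<close> and to an \<open>arctan\<close> for \<open>x < 0\<close>.
  At \<open>s = 1/4\<close> everything vanishes (\<open>v = 0\<close>); at \<open>s = 0\<close> we have \<open>v = 1\<close>, where the
  \<open>v\<close>-antiderivative equals \<open>R x / x\<close>.\<close>

definition inv_diff_sq_antideriv :: "real \<Rightarrow> real \<Rightarrow> real" where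
  "inv_diff_sq_antideriv x v =
     (if x > 0 then artanh (v / sqrt x) / sqrt x else - arctan (v / sqrt (- x)) / sqrt (- x))"

lemma has_real_derivative_inv_diff_sq_antideriv:
  fixes x v :: real
  assumes "x < 0 \<or> v\<^sup>2 < x"
  shows "(inv_diff_sq_antideriv x has_real_derivative 1 / (x - v\<^sup>2)) (at v)"
proof (cases "x > 0")
  case True
  then have "\<bar>v / sqrt x\<bar> < 1"
    using assms real_sqrt_less_mono[of "v\<^sup>2" x] by (auto simp: divide_simps)
  then have "((\<lambda>v. artanh (v / sqrt x) / sqrt x) has_real_derivative
              1 / (1 - (v / sqrt x)\<^sup>2) * (1 / sqrt x) / sqrt x) (at v)"
    by (intro DERIV_cdivide DERIV_chain2[OF artanh_real_has_field_derivative] DERIV_cdivide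
        DERIV_ident) auto
  moreover have "1 / (1 - (v / sqrt x)\<^sup>2) * (1 / sqrt x) / sqrt x = 1 / (x - v\<^sup>2)"
    using True assms by (simp add: divide_simps)
  ultimately show ?thesis
    using True by (simp add: inv_diff_sq_antideriv_def[abs_def])
next
  case False
  then have "x < 0" using assms by (smt (verit) zero_le_power2)
  have "((\<lambda>v. - arctan (v / sqrt (- x)) / sqrt (- x)) has_real_derivative
          - (inverse (1 + (v / sqrt (- x))\<^sup>2) * (1 / sqrt (- x))) / sqrt (- x)) (at v)"
    by (intro DERIV_cdivide DERIV_minus DERIV_chain2[OF DERIV_arctan] DERIV_cdivide DERIV_ident)
  moreover have "- (inverse (1 + (v / sqrt (- x))\<^sup>2) * (1 / sqrt (- x))) / sqrt (- x)
                  = 1 / (x - v\<^sup>2)"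
    using \<open>x < 0\<close> by (simp add: divide_simps)
  ultimately show ?thesis
    using False by (simp add: inv_diff_sq_antideriv_def[abs_def])
qed

definition F_denom :: "real \<Rightarrow> real \<Rightarrow> real" where
  "F_denom x s = 4 * s\<^sup>2 + x * (x - 1)"

lemma F_denom_pos:
  fixes x s :: real
  assumes "x > 1 \<or> x < 0"
  shows "F_denom x s > 0"
proof -
  have "x * (x - 1) > 0"
    using assms by (auto simp: zero_less_mult_iff)
  then show ?thesis
    unfolding F_denom_def by (smt (verit) zero_le_power2)
qed

definition antideriv_poly :: "real \<Rightarrow> real \<Rightarrow> real" where
  "antideriv_poly x s =
     (5 * x - 6) * (x - 1) / 8 + (8 * x - 9) * (x - 1) / 4 * s + s\<^sup>2 / 2 + 3 * s ^ 3 / x"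

lemma has_real_derivative_sqrt_antideriv_poly:
  fixes x s :: real
  assumes "x \<noteq> 0" "s < 1/4" "F_denom x s \<noteq> 0"
  defines "P \<equiv> antideriv_poly x s" and "Q \<equiv> F_denom x s"
  defines "P' \<equiv> (8 * x - 9) * (x - 1) / 4 + s + 9 * s\<^sup>2 / x"
  shows "((\<lambda>s. sqrt (1 - 4 * s) * antideriv_poly x s / (F_denom x s)\<^sup>2) has_real_derivative
           (- 2 * P * Q + (1 - 4 * s) * (P' * Q - 16 * s * P)) / (sqrt (1 - 4 * s) * Q ^ 3)) (at s)"
proof -
  have du: "((\<lambda>s. sqrt (1 - 4 * s)) has_real_derivative - 2 / sqrt (1 - 4 * s)) (at s)"
    using assms(2) by (auto intro!: derivative_eq_intros simp: inverse_eq_divide)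
  have dP: "(antideriv_poly x has_real_derivative P') (at s)"
    using assms(1) unfolding antideriv_poly_def[abs_def] P'_def
    by (auto intro!: derivative_eq_intros simp: field_simps power2_eq_square)
  have dQ: "(F_denom x has_real_derivative 8 * s) (at s)"
    unfolding F_denom_def[abs_def] by (auto intro!: derivative_eq_intros simp: power2_eq_square)
  have "((\<lambda>s. sqrt (1 - 4 * s) * antideriv_poly x s / (F_denom x s)\<^sup>2) has_real_derivative
         ((- 2 / sqrt (1 - 4 * s) * P + P' * sqrt (1 - 4 * s)) * Q\<^sup>2
           - sqrt (1 - 4 * s) * P * (of_nat 2 * (8 * s) * Q ^ (2 - Suc 0))) / (Q\<^sup>2 * Q\<^sup>2)) (at s)"
    unfolding P_def Q_def
    using DERIV_divide[OF DERIV_mult[OF du dP] DERIV_power[OF dQ, of 2]] assms(3)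
    by (simp add: mult.assoc)
  moreover have "((- 2 / u * P + P' * u) * Q\<^sup>2 - u * P * (of_nat 2 * (8 * s) * Q ^ (2 - Suc 0)))
                   / (Q\<^sup>2 * Q\<^sup>2)
      = (- 2 * P * Q + u\<^sup>2 * (P' * Q - 16 * s * P)) / (u * Q ^ 3)" if "u > 0" for u
    using that assms(3) unfolding Q_def[symmetric]
    by (simp add: field_simps power2_eq_square power3_eq_cube)
  ultimately show ?thesis
    using assms(2) by simp
qed

definition antideriv_arg :: "real \<Rightarrow> real \<Rightarrow> real" where
  "antideriv_arg x s = x * sqrt (1 - 4 * s) / (x - 2 * s)"

lemma x_minus_antideriv_arg_sq:
  fixes x s :: real
  assumes "s \<le> 1/4" "x \<noteq> 2 * s"
  shows "x - (antideriv_arg x s)\<^sup>2 = x * F_denom x s / (x - 2 * s)\<^sup>2"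
proof -
  have "x - (antideriv_arg x s)\<^sup>2 = (x * (x - 2 * s)\<^sup>2 - x\<^sup>2 * (1 - 4 * s)) / (x - 2 * s)\<^sup>2"
    using assms by (simp add: antideriv_arg_def power_divide power_mult_distrib field_simps)
  also have "x * (x - 2 * s)\<^sup>2 - x\<^sup>2 * (1 - 4 * s) = x * F_denom x s"
    by (simp add: F_denom_def power2_eq_square algebra_simps)
  finally show ?thesis .
qed

lemma has_real_derivative_antideriv_arg:
  fixes x s :: real
  assumes "s < 1/4" "x \<noteq> 2 * s"
  shows "(antideriv_arg x has_real_derivative
           2 * x * (1 - x - 2 * s) / (sqrt (1 - 4 * s) * (x - 2 * s)\<^sup>2)) (at s)"
proof -
  have "(antideriv_arg x has_real_derivative
          (x * (- 2 / sqrt (1 - 4 * s)) * (x - 2 * s) - x * sqrt (1 - 4 * s) * (- 2))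
            / ((x - 2 * s) * (x - 2 * s))) (at s)"
    unfolding antideriv_arg_def[abs_def] using assms
    by (auto intro!: derivative_eq_intros simp: inverse_eq_divide)
  moreover have "(x * (- 2 / u) * (x - 2 * s) - x * u * (- 2)) / ((x - 2 * s) * (x - 2 * s))
      = 2 * x * (u\<^sup>2 - (x - 2 * s)) / (u * (x - 2 * s)\<^sup>2)" if "u > 0" for u
    using that assms(2) by (simp add: field_simps power2_eq_square)
  ultimately show ?thesis
    using assms(1) by simp
qed

lemma antideriv_arg_in_domain:
  fixes x s :: real
  assumes x: "x > 1 \<or> x < 0" and s: "0 \<le> s" "s \<le> 1/4"
  shows "x \<noteq> 2 * s" "x < 0 \<or> (antideriv_arg x s)\<^sup>2 < x"
proof -
  show "x \<noteq> 2 * s"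
    using x s by auto
  then have "x - (antideriv_arg x s)\<^sup>2 = x * F_denom x s / (x - 2 * s)\<^sup>2"
    using s(2) by (simp add: x_minus_antideriv_arg_sq)
  moreover have "x * F_denom x s / (x - 2 * s)\<^sup>2 > 0" if "x > 1"
    using that F_denom_pos[OF x, of s] \<open>x \<noteq> 2 * s\<close> by (simp add: divide_pos_pos)
  ultimately show "x < 0 \<or> (antideriv_arg x s)\<^sup>2 < x"
    using x by auto
qed

lemma has_real_derivative_inv_diff_sq_antideriv_comp_arg:
  fixes x s :: real
  assumes x: "x > 1 \<or> x < 0" and s: "0 \<le> s" "s < 1/4"
  shows "((\<lambda>s. inv_diff_sq_antideriv x (antideriv_arg x s)) has_real_derivative
           2 * (1 - x - 2 * s) / (sqrt (1 - 4 * s) * F_denom x s)) (at s)"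
proof -
  have x2s: "x \<noteq> 2 * s" and dom: "x < 0 \<or> (antideriv_arg x s)\<^sup>2 < x"
    using antideriv_arg_in_domain[OF x] s by auto
  have nonzero: "x \<noteq> 0" "F_denom x s \<noteq> 0" "sqrt (1 - 4 * s) \<noteq> 0" "(x - 2 * s)\<^sup>2 \<noteq> 0"
    using x s x2s F_denom_pos[OF x, of s] by auto
  have "((\<lambda>s. inv_diff_sq_antideriv x (antideriv_arg x s)) has_real_derivative
          1 / (x - (antideriv_arg x s)\<^sup>2)
            * (2 * x * (1 - x - 2 * s) / (sqrt (1 - 4 * s) * (x - 2 * s)\<^sup>2))) (at s)"
    by (rule DERIV_chain2[OF has_real_derivative_inv_diff_sq_antideriv[OF dom]
          has_real_derivative_antideriv_arg[OF s(2) x2s]])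
  moreover have "1 / (x * F_denom x s / (x - 2 * s)\<^sup>2)
              * (2 * x * (1 - x - 2 * s) / (sqrt (1 - 4 * s) * (x - 2 * s)\<^sup>2))
      = 2 * (1 - x - 2 * s) / (sqrt (1 - 4 * s) * F_denom x s)"
    using nonzero by (simp add: field_simps)
  ultimately show ?thesis
    by (simp add: x_minus_antideriv_arg_sq[OF less_imp_le[OF s(2)] x2s])
qed

lemma F_eq_over_denom_cube:
  fixes x s :: real
  assumes "F_denom x s \<noteq> 0"
  shows "F x s =
           ((20 * x\<^sup>2 - 56 * x + 35) * F_denom x s - 4 * (x - 1) * (2 * x - 3) * (2 * x - 1)\<^sup>2)
             / (F_denom x s) ^ 3"
  using assms unfolding F_def F_denom_def[symmetric]
  by (simp add: field_simps power2_eq_square power3_eq_cube)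

lemma antideriv_poly_identity:
  fixes x s :: real
  assumes "x \<noteq> 0"
  defines "P \<equiv> antideriv_poly x s" and "Q \<equiv> F_denom x s"
  defines "P' \<equiv> (8 * x - 9) * (x - 1) / 4 + s + 9 * s\<^sup>2 / x"
  shows "- 2 * P * Q + (1 - 4 * s) * (P' * Q - 16 * s * P) + 3 / (4 * x) * (1 - x - 2 * s) * Q\<^sup>2
       = s * ((20 * x\<^sup>2 - 56 * x + 35) * Q - 4 * (x - 1) * (2 * x - 3) * (2 * x - 1)\<^sup>2)"
  using assms(1) unfolding P_def Q_def P'_def antideriv_poly_def F_denom_def
  by (simp add: field_simps) algebra

definition antideriv :: "real \<Rightarrow> real \<Rightarrow> real" where
  "antideriv x s = sqrt (1 - 4 * s) * antideriv_poly x s / (F_denom x s)\<^sup>2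
                   + 3 / (8 * x) * inv_diff_sq_antideriv x (antideriv_arg x s)"

lemma has_real_derivative_antideriv:
  fixes x s :: real
  assumes x: "x > 1 \<or> x < 0" and s: "0 \<le> s" "s < 1/4"
  shows "(antideriv x has_real_derivative s * F x s / sqrt (1 - 4 * s)) (at s)"
proof -
  define u where "u = sqrt (1 - 4 * s)"
  define P where "P = antideriv_poly x s"
  define Q where "Q = F_denom x s"
  define P' where "P' = (8 * x - 9) * (x - 1) / 4 + s + 9 * s\<^sup>2 / x"
  have x0: "x \<noteq> 0" and Q0: "Q \<noteq> 0" and u0: "u > 0"
    using x s F_denom_pos[OF x, of s] by (auto simp: Q_def u_def)
  have "(antideriv x has_real_derivative
          (- 2 * P * Q + (1 - 4 * s) * (P' * Q - 16 * s * P)) / (u * Q ^ 3)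
          + 3 / (8 * x) * (2 * (1 - x - 2 * s) / (u * Q))) (at s)"
    unfolding antideriv_def[abs_def] u_def P_def Q_def P'_def
    using Q0 x0 s
    by (intro DERIV_add DERIV_cmult has_real_derivative_sqrt_antideriv_poly
        has_real_derivative_inv_diff_sq_antideriv_comp_arg x) (auto simp: Q_def)
  moreover have "(- 2 * P * Q + (1 - 4 * s) * (P' * Q - 16 * s * P)) / (u * Q ^ 3)
          + 3 / (8 * x) * (2 * (1 - x - 2 * s) / (u * Q))
      = (- 2 * P * Q + (1 - 4 * s) * (P' * Q - 16 * s * P) + 3 / (4 * x) * (1 - x - 2 * s) * Q\<^sup>2)
          / (u * Q ^ 3)"
    using x0 Q0 u0 by (simp add: field_simps power2_eq_square power3_eq_cube)
  moreover have "\<dots> = s * F x s / u"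
    unfolding antideriv_poly_identity[OF x0, of s, folded P_def Q_def P'_def]
      F_eq_over_denom_cube[OF Q0[unfolded Q_def]] Q_def[symmetric]
    using Q0 u0 by (simp add: field_simps)
  ultimately show ?thesis
    by (simp add: u_def)
qed

lemma isCont_antideriv:
  fixes x s :: real
  assumes x: "x > 1 \<or> x < 0" and s: "0 \<le> s" "s \<le> 1/4"
  shows "isCont (antideriv x) s"
proof -
  have "isCont (antideriv_arg x) s"
    unfolding antideriv_arg_def[abs_def] using antideriv_arg_in_domain(1)[OF x s]
    by (intro continuous_intros) auto
  moreover have "isCont (inv_diff_sq_antideriv x) (antideriv_arg x s)"
    using has_real_derivative_inv_diff_sq_antideriv[OF antideriv_arg_in_domain(2)[OF x s]]
    by (rule DERIV_isCont)
  ultimately have "isCont (\<lambda>s. inv_diff_sq_antideriv x (antideriv_arg x s)) s"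
    by (rule isCont_o2)
  moreover have "x \<noteq> 0" "F_denom x s \<noteq> 0"
    using x F_denom_pos[OF x, of s] by auto
  ultimately show ?thesis
    unfolding antideriv_def[abs_def] antideriv_poly_def F_denom_def
    by (intro continuous_intros) auto
qed

lemma antideriv_quarter: "antideriv x (1/4) = 0"
  by (simp add: antideriv_def antideriv_arg_def inv_diff_sq_antideriv_def)

lemma inv_diff_sq_antideriv_one:
  fixes x :: real
  assumes "x > 1 \<or> x < 0"
  shows "x * inv_diff_sq_antideriv x 1 = R x"
proof (cases "x > 1")
  case True
  have "1 + 1 / sqrt x = (sqrt x + 1) / sqrt x" "1 - 1 / sqrt x = (sqrt x - 1) / sqrt x"
    using True by (simp_all add: field_simps)
  then have "artanh (1 / sqrt x) = ln ((sqrt x + 1) / (sqrt x - 1)) / 2"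
    using True by (simp add: artanh_def)
  moreover have "x * inv_diff_sq_antideriv x 1 = x / sqrt x * artanh (1 / sqrt x)"
    using True by (simp add: inv_diff_sq_antideriv_def)
  moreover have "x / sqrt x = sqrt x"
    using True by (simp add: real_div_sqrt)
  ultimately show ?thesis
    using True by (simp add: R_def)
next
  case False
  then have "x < 0" using assms by auto
  then have "x * inv_diff_sq_antideriv x 1 = (- x) / sqrt (- x) * arctan (1 / sqrt (- x))"
    by (simp add: inv_diff_sq_antideriv_def)
  also have "(- x) / sqrt (- x) = sqrt (- x)"
    using \<open>x < 0\<close> by (intro real_div_sqrt) simp
  finally show ?thesis
    using \<open>x < 0\<close> by (simp add: R_def)
qed

lemma antideriv_zero:
  fixes x :: real
  assumes "x > 1 \<or> x < 0"
  shows "8 * x\<^sup>2 * (x - 1) * antideriv x 0 = 3 * (x - 1) * R x + 5 * x - 6"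
proof -
  have "x \<noteq> 0" "x - 1 \<noteq> 0"
    using assms by auto
  then have "antideriv x 0 = (5 * x - 6) * (x - 1) / 8 / (x * (x - 1))\<^sup>2
                            + 3 / (8 * x) * inv_diff_sq_antideriv x 1"
    by (simp add: antideriv_def antideriv_arg_def antideriv_poly_def F_denom_def)
  also have "\<dots> = (5 * x - 6) / (8 * x\<^sup>2 * (x - 1)) + 3 / (8 * x) * inv_diff_sq_antideriv x 1"
    using \<open>x - 1 \<noteq> 0\<close> by (simp add: power_mult_distrib power2_eq_square)
  also have "\<dots> = (5 * x - 6 + 3 * (x - 1) * (x * inv_diff_sq_antideriv x 1)) / (8 * x\<^sup>2 * (x - 1))"
    using \<open>x \<noteq> 0\<close> \<open>x - 1 \<noteq> 0\<close> by (simp add: field_simps power2_eq_square)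
  finally show ?thesis
    using \<open>x \<noteq> 0\<close> \<open>x - 1 \<noteq> 0\<close> by (simp add: inv_diff_sq_antideriv_one[OF assms])
qed

theorem lemma5p2:
  fixes x :: real
  assumes "x > 1 \<or> x < 0"
  shows "(\<lambda>s. s * F x s / sqrt (1 - 4 * s)) integrable_on {0..1/4} \<and>
         8 * x^2 * (1 - x) * integral {0..1/4} (\<lambda>s. s * F x s / sqrt (1 - 4 * s))
           = 3 * (x - 1) * R x + 5 * x - 6"
proof -
  have "((\<lambda>s. s * F x s / sqrt (1 - 4 * s)) has_integral antideriv x (1/4) - antideriv x 0)
          {0..1/4}"
  proof (rule fundamental_theorem_of_calculus_interior)
    show "continuous_on {0..1/4} (antideriv x)"
      using isCont_antideriv[OF assms] by (intro continuous_at_imp_continuous_on) auto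
    show "(antideriv x has_vector_derivative s * F x s / sqrt (1 - 4 * s)) (at s)"
      if "s \<in> {0<..<1/4}" for s
      using has_real_derivative_antideriv[OF assms] that
      by (simp add: has_real_derivative_iff_has_vector_derivative[symmetric])
  qed simp
  then show ?thesis
    using antideriv_zero[OF assms]
    by (auto simp: integral_unique has_integral_integrable antideriv_quarter algebra_simps)
qed

end
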